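(* Let $n\ge1$, let $\Omega$ be the set of all Borel probability measures on $[0,1]$, let $D(x_0,\dots,x_n;p)=\sum_{k=0}^n\binom{n}{k}p^k(1-p)^{n-k}|p-x_k|$, and for $\sigma_0,\dots,\sigma_n,\mu\in\Omega$ put $E(\sigma_0,\dots,\sigma_n;\mu)=\int\cdots\int D(x_0,\dots,x_n;p)\,d\sigma_0(x_0)\cdots d\sigma_n(x_n)\,d\mu(p)$. Then $$\min_{\sigma_0,\dots,\sigma_n\in\Omega}\max_{\mu\in\Omega}E(\sigma_0,\dots,\sigma_n;\mu)=\min_{a_0,\dots,a_n\in[0,1]}\max_{p\in[0,1]}D(a_0,\dots,a_n;p)=\min_{a_0,\dots,a_n\in[0,1]}\|D(a_0,\dots,a_n;\cdot)\|_\infty.$$ *)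

theory Defs
  imports "HOL-Probability.Probability"
begin

definition D :: "nat \<Rightarrow> (nat \<Rightarrow> real) \<Rightarrow> real \<Rightarrow> real" where
  "D n x p = (\<Sum>k\<le>n. real (n choose k) * p ^ k * (1 - p) ^ (n - k) * \<bar>p - x k\<bar>)"

definition Omega :: "real measure set" where
  "Omega = {M. prob_space M \<and> sets M = sets (restrict_space borel {0..1})}"

definition E :: "nat \<Rightarrow> (nat \<Rightarrow> real measure) \<Rightarrow> real measure \<Rightarrow> real" where
  "E n \<sigma> \<mu> = (\<integral>p. (\<integral>x. D n x p \<partial>(PiM {..n} \<sigma>)) \<partial>\<mu>)"

definition is_max_of :: "real set \<Rightarrow> real \<Rightarrow> bool" where
  "is_max_of S v \<longleftrightarrow> v \<in> S \<and> (\<forall>y\<in>S. y \<le> v)"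

definition is_min_of :: "real set \<Rightarrow> real \<Rightarrow> bool" where
  "is_min_of S v \<longleftrightarrow> v \<in> S \<and> (\<forall>y\<in>S. v \<le> y)"

definition minmax_val :: "'a set \<Rightarrow> 'b set \<Rightarrow> ('a \<Rightarrow> 'b \<Rightarrow> real) \<Rightarrow> real \<Rightarrow> bool" where
  "minmax_val X Y f V \<longleftrightarrow>
     (\<forall>x\<in>X. \<exists>m. is_max_of (f x ` Y) m) \<and>
     is_min_of {m. \<exists>x\<in>X. is_max_of (f x ` Y) m} V"

end

theory Submission
  imports Defs
begin

(*
  Dirac measures embed [0,1] into Omega, and E is linear in mu: E(sigma; mu) is the mu-integral
  of expected_D(sigma; p) = sum_k b_{n,k}(p) * int |p - x| d sigma_k(x). So the inner maximum over
  mu is max_p expected_D(sigma; p), attained at a Dirac measure. Jensen's inequality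
  |p - int x d sigma_k| <= int |p - x| d sigma_k gives expected_D(sigma; .) >= D(means of sigma; .),
  while Dirac measures sigma_k = delta_{a_k} give expected_D(sigma; .) = D(a; .); hence both
  min-max problems have the same value. The outer minimum exists because a |-> max_p D(a; p) is
  a supremum of continuous functions, hence lower semicontinuous, on the compact cube [0,1]^(n+1).
*)

abbreviation unit_borel :: "real measure" where
  "unit_borel \<equiv> restrict_space borel {0..1}"

lemma Omega_prob_space: "M \<in> Omega \<Longrightarrow> prob_space M"
  by (simp add: Omega_def)

lemma sets_Omega: "M \<in> Omega \<Longrightarrow> sets M = sets unit_borel"
  by (simp add: Omega_def)

lemma space_Omega: "M \<in> Omega \<Longrightarrow> space M = {0..1}"
  using sets_eq_imp_space_eq[OF sets_Omega] by (simp add: space_restrict_space)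

lemma borel_measurable_Omega:
  assumes "M \<in> Omega" "f \<in> borel_measurable unit_borel"
  shows "f \<in> borel_measurable M"
  by (subst measurable_cong_sets[OF sets_Omega[OF assms(1)] refl]) (rule assms(2))

lemma continuous_on_borel_measurable_Omega:
  "M \<in> Omega \<Longrightarrow> continuous_on {0..1} f \<Longrightarrow> f \<in> borel_measurable M"
  by (rule borel_measurable_Omega[OF _ borel_measurable_continuous_on_restrict])

lemma return_in_Omega: "a \<in> {0..1} \<Longrightarrow> return unit_borel a \<in> Omega"
  by (auto simp: Omega_def intro!: prob_space_return)

lemma integrable_Omega:
  fixes f :: "real \<Rightarrow> real"
  assumes "M \<in> Omega" "continuous_on {0..1} f"
  shows "integrable M f"
proof -
  interpret prob_space M using assms(1) by (rule Omega_prob_space)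
  obtain B where B: "\<And>x. x \<in> {0..1} \<Longrightarrow> norm (f x) \<le> B"
    using compact_imp_bounded[OF compact_continuous_image[OF assms(2) compact_Icc]]
    unfolding bounded_iff by blast
  show ?thesis
  proof (rule integrable_const_bound)
    show "AE x in M. norm (f x) \<le> B"
      using B by (intro AE_I2) (simp add: space_Omega[OF assms(1)])
  qed (rule continuous_on_borel_measurable_Omega[OF assms])
qed

definition mean_dist :: "real measure \<Rightarrow> real \<Rightarrow> real" where
  "mean_dist M p = (\<integral>x. \<bar>p - x\<bar> \<partial>M)"

lemma integrable_dist_Omega: "M \<in> Omega \<Longrightarrow> integrable M (\<lambda>x. \<bar>p - x\<bar>)"
  by (rule integrable_Omega) (auto intro!: continuous_intros)

lemma integrable_id_Omega: "M \<in> Omega \<Longrightarrow> integrable M (\<lambda>x. x)"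
  by (rule integrable_Omega) (auto intro!: continuous_intros)

lemma mean_dist_lipschitz:
  assumes "M \<in> Omega"
  shows "\<bar>mean_dist M p - mean_dist M q\<bar> \<le> \<bar>p - q\<bar>"
proof -
  interpret prob_space M using assms by (rule Omega_prob_space)
  have "mean_dist M p - mean_dist M q = (\<integral>x. \<bar>p - x\<bar> - \<bar>q - x\<bar> \<partial>M)"
    unfolding mean_dist_def using integrable_dist_Omega[OF assms] by simp
  also have "\<bar>\<dots>\<bar> \<le> (\<integral>x. \<bar>\<bar>p - x\<bar> - \<bar>q - x\<bar>\<bar> \<partial>M)"
    by (rule integral_abs_bound)
  also have "\<dots> \<le> (\<integral>x. \<bar>p - q\<bar> \<partial>M)"
    using integrable_dist_Omega[OF assms] by (intro integral_mono) auto
  also have "\<dots> = \<bar>p - q\<bar>"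
    by (simp add: prob_space)
  finally show ?thesis .
qed

lemma continuous_on_mean_dist: "M \<in> Omega \<Longrightarrow> continuous_on S (mean_dist M)"
  by (rule lipschitz_on_continuous_on, rule lipschitz_onI[where L = 1])
     (auto simp: dist_real_def mean_dist_lipschitz)

lemma dist_expectation_le_mean_dist:
  assumes "M \<in> Omega"
  shows "\<bar>p - (\<integral>x. x \<partial>M)\<bar> \<le> mean_dist M p"
proof -
  interpret prob_space M using assms by (rule Omega_prob_space)
  have "p - (\<integral>x. x \<partial>M) = (\<integral>x. p - x \<partial>M)"
    using integrable_id_Omega[OF assms] by (simp add: prob_space)
  also have "\<bar>\<dots>\<bar> \<le> mean_dist M p"
    unfolding mean_dist_def by (rule integral_abs_bound)
  finally show ?thesis .
qed

lemma expectation_Omega_in_unit: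
  assumes "M \<in> Omega"
  shows "(\<integral>x. x \<partial>M) \<in> {0..1}"
proof -
  interpret prob_space M using assms by (rule Omega_prob_space)
  have "0 \<le> (\<integral>x. x \<partial>M)"
    by (rule integral_nonneg_AE, rule AE_I2) (simp add: space_Omega[OF assms])
  moreover have "(\<integral>x. x \<partial>M) \<le> 1"
    by (rule integral_le_const[OF integrable_id_Omega[OF assms]], rule AE_I2)
       (simp add: space_Omega[OF assms])
  ultimately show ?thesis by simp
qed

lemma mean_dist_return: "a \<in> {0..1} \<Longrightarrow> mean_dist (return unit_borel a) p = \<bar>p - a\<bar>"
  unfolding mean_dist_def by (subst integral_return) (auto intro!: measurable_restrict_space1)

definition expected_D :: "nat \<Rightarrow> (nat \<Rightarrow> real measure) \<Rightarrow> real \<Rightarrow> real" where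
  "expected_D n \<sigma> p =
     (\<Sum>k\<le>n. real (n choose k) * p ^ k * (1 - p) ^ (n - k) * mean_dist (\<sigma> k) p)"

lemma
  assumes "\<sigma> \<in> {..n} \<rightarrow>\<^sub>E Omega" "k \<le> n"
  shows integrable_PiM_dist_component: "integrable (PiM {..n} \<sigma>) (\<lambda>x. \<bar>p - x k\<bar>)"
    and integral_PiM_dist_component: "(\<integral>x. \<bar>p - x k\<bar> \<partial>PiM {..n} \<sigma>) = mean_dist (\<sigma> k) p"
proof -
  have \<sigma>k: "\<sigma> k \<in> Omega"
    using assms by auto
  have distr_eq: "distr (PiM {..n} \<sigma>) (\<sigma> k) (\<lambda>x. x k) = \<sigma> k"
    using assms by (intro distr_PiM_component) (auto intro: Omega_prob_space)
  have proj: "(\<lambda>x. x k) \<in> measurable (PiM {..n} \<sigma>) (\<sigma> k)"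
    using assms by (intro measurable_component_singleton) auto
  have dist: "(\<lambda>y. \<bar>p - y\<bar>) \<in> borel_measurable (\<sigma> k)"
    using \<sigma>k by (rule continuous_on_borel_measurable_Omega) (auto intro!: continuous_intros)
  show "integrable (PiM {..n} \<sigma>) (\<lambda>x. \<bar>p - x k\<bar>)"
    using integrable_distr_eq[OF proj dist] integrable_dist_Omega[OF \<sigma>k] distr_eq by simp
  show "(\<integral>x. \<bar>p - x k\<bar> \<partial>PiM {..n} \<sigma>) = mean_dist (\<sigma> k) p"
    using integral_distr[OF proj dist] distr_eq unfolding mean_dist_def by simp
qed

lemma integral_D_PiM:
  assumes "\<sigma> \<in> {..n} \<rightarrow>\<^sub>E Omega"
  shows "(\<integral>x. D n x p \<partial>PiM {..n} \<sigma>) = expected_D n \<sigma> p"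
  unfolding D_def expected_D_def
  by (subst Bochner_Integration.integral_sum)
     (auto intro!: sum.cong integrable_PiM_dist_component[OF assms]
       simp: integral_PiM_dist_component[OF assms])

lemma E_eq_integral_expected_D:
  "\<sigma> \<in> {..n} \<rightarrow>\<^sub>E Omega \<Longrightarrow> E n \<sigma> \<mu> = (\<integral>p. expected_D n \<sigma> p \<partial>\<mu>)"
  unfolding E_def by (simp add: integral_D_PiM)

lemma continuous_on_expected_D:
  "\<sigma> \<in> {..n} \<rightarrow>\<^sub>E Omega \<Longrightarrow> continuous_on S (expected_D n \<sigma>)"
  unfolding expected_D_def by (intro continuous_intros continuous_on_mean_dist) auto

lemma expected_D_return:
  assumes "a \<in> {..n} \<rightarrow>\<^sub>E {0..1}"
  shows "expected_D n (\<lambda>k\<in>{..n}. return unit_borel (a k)) = D n a"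
  unfolding expected_D_def D_def using assms
  by (auto simp: mean_dist_return PiE_iff intro!: ext sum.cong)

lemma D_expectation_le_expected_D:
  assumes "\<sigma> \<in> {..n} \<rightarrow>\<^sub>E Omega" "p \<in> {0..1}"
  shows "D n (\<lambda>k\<in>{..n}. \<integral>x. x \<partial>\<sigma> k) p \<le> expected_D n \<sigma> p"
  unfolding D_def expected_D_def
  using assms by (auto intro!: sum_mono mult_left_mono dist_expectation_le_mean_dist)

lemma expectations_in_cube:
  "\<sigma> \<in> {..n} \<rightarrow>\<^sub>E Omega \<Longrightarrow> (\<lambda>k\<in>{..n}. \<integral>x. x \<partial>\<sigma> k) \<in> {..n} \<rightarrow>\<^sub>E {0..1}"
  by (auto intro: expectation_Omega_in_unit)

lemma is_max_of_SUP:
  fixes f :: "'a::topological_space \<Rightarrow> real"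
  assumes "compact S" "S \<noteq> {}" "continuous_on S f"
  shows "is_max_of (f ` S) (SUP x\<in>S. f x)"
proof -
  obtain x where x: "x \<in> S" "\<forall>y\<in>S. f y \<le> f x"
    using continuous_attains_sup[OF assms] by blast
  then have "(SUP x\<in>S. f x) = f x"
    by (intro cSup_eq_maximum) auto
  with x show ?thesis
    unfolding is_max_of_def by auto
qed

lemma is_max_of_unique: "is_max_of S m \<Longrightarrow> is_max_of S m' \<Longrightarrow> m = m'"
  unfolding is_max_of_def by (meson antisym)

lemma minmax_valI:
  assumes "\<And>x. x \<in> X \<Longrightarrow> is_max_of (f x ` Y) (g x)" "is_min_of (g ` X) V"
  shows "minmax_val X Y f V"
proof -
  have "{m. \<exists>x\<in>X. is_max_of (f x ` Y) m} = g ` X"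
    using assms(1) is_max_of_unique by blast
  with assms show ?thesis
    unfolding minmax_val_def by auto
qed

lemma compactin_lower_semicontinuous_attains_inf:
  fixes f :: "'a \<Rightarrow> real"
  assumes S: "compactin X S" "S \<noteq> {}"
    and lsc: "\<And>t. closedin X {x \<in> topspace X. f x \<le> t}"
  shows "\<exists>x\<in>S. \<forall>y\<in>S. f x \<le> f y"
proof -
  define C where "C y = {x \<in> topspace X. f x \<le> f y}" for y
  have fip: "S \<inter> \<Inter>\<F> \<noteq> {}" if \<F>: "finite \<F>" "\<F> \<subseteq> C ` S" for \<F>
  proof -
    obtain T where T: "T \<subseteq> S" "finite T" "\<F> = C ` T"
      using finite_subset_image[OF \<F>] by blast
    show ?thesis
    proof (cases "T = {}")
      case False
      have "Min (f ` T) \<in> f ` T"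
        using T(2) False by (intro Min_in) auto
      then obtain y where y: "y \<in> T" "f y = Min (f ` T)"
        by auto
      have "y \<in> S \<inter> \<Inter>\<F>"
        using y T compactin_subset_topspace[OF S(1)] by (auto simp: C_def)
      then show ?thesis by blast
    qed (use T S(2) in auto)
  qed
  have closed: "\<forall>U\<in>C ` S. closedin X U"
    using lsc unfolding C_def by blast
  have "S \<inter> \<Inter>(C ` S) \<noteq> {}"
    using S(1) unfolding compactin_fip
    by (elim conjE allE[of _ "C ` S"] impE) (use closed fip in auto)
  then show ?thesis
    unfolding C_def by blast
qed

lemma closedin_SUP_continuous_le:
  fixes g :: "'a \<Rightarrow> 'b \<Rightarrow> real"
  assumes "\<And>p. p \<in> P \<Longrightarrow> continuous_map X euclideanreal (\<lambda>x. g x p)"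
    and "\<And>x. x \<in> topspace X \<Longrightarrow> is_max_of (g x ` P) (G x)"
  shows "closedin X {x \<in> topspace X. G x \<le> t}"
proof -
  have "{x \<in> topspace X. G x \<le> t} =
      \<Inter>(insert (topspace X) ((\<lambda>p. {x \<in> topspace X. g x p \<le> t}) ` P))"
    using assms(2) unfolding is_max_of_def by fastforce
  also have "closedin X \<dots>"
    using assms(1) by (intro closedin_Inter) (auto simp: continuous_map_upper_lower_semicontinuous_le)
  finally show ?thesis .
qed

lemma E_return:
  assumes "\<sigma> \<in> {..n} \<rightarrow>\<^sub>E Omega" "p \<in> {0..1}"
  shows "E n \<sigma> (return unit_borel p) = expected_D n \<sigma> p"
  unfolding E_eq_integral_expected_D[OF assms(1)] using assms
  by (subst integral_return)
     (auto intro!: borel_measurable_continuous_on_restrict continuous_on_expected_D)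

lemma E_le_bound:
  assumes "\<sigma> \<in> {..n} \<rightarrow>\<^sub>E Omega" "\<mu> \<in> Omega" "\<And>p. p \<in> {0..1} \<Longrightarrow> expected_D n \<sigma> p \<le> m"
  shows "E n \<sigma> \<mu> \<le> m"
proof -
  interpret prob_space \<mu> using assms(2) by (rule Omega_prob_space)
  show ?thesis
    unfolding E_eq_integral_expected_D[OF assms(1)]
    using assms by (intro integral_le_const AE_I2 integrable_Omega continuous_on_expected_D)
      (auto simp: space_Omega)
qed

lemma is_max_of_E:
  assumes "\<sigma> \<in> {..n} \<rightarrow>\<^sub>E Omega"
  shows "is_max_of (E n \<sigma> ` Omega) (SUP p\<in>{0..1}. expected_D n \<sigma> p)"
proof -
  have "is_max_of (expected_D n \<sigma> ` {0..1}) (SUP p\<in>{0..1}. expected_D n \<sigma> p)"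
    using assms by (intro is_max_of_SUP continuous_on_expected_D) auto
  then obtain p where p: "p \<in> {0..1}" "expected_D n \<sigma> p = (SUP p\<in>{0..1}. expected_D n \<sigma> p)"
    and le: "\<And>q. q \<in> {0..1} \<Longrightarrow> expected_D n \<sigma> q \<le> expected_D n \<sigma> p"
    unfolding is_max_of_def by auto
  have "E n \<sigma> (return unit_borel p) = expected_D n \<sigma> p"
    using E_return[OF assms p(1)] .
  moreover have "return unit_borel p \<in> Omega"
    using p(1) by (rule return_in_Omega)
  moreover have "E n \<sigma> \<mu> \<le> expected_D n \<sigma> p" if "\<mu> \<in> Omega" for \<mu>
    using E_le_bound[OF assms that le] .
  ultimately show ?thesis
    unfolding is_max_of_def p(2) by (metis image_eqI imageE)
qed

lemma continuous_map_D:
  "continuous_map (product_topology (\<lambda>_. euclideanreal) {..n}) euclideanreal (\<lambda>a. D n a p)"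
  unfolding D_def real_norm_def[symmetric]
  by (intro continuous_map_sum continuous_map_real_mult continuous_map_norm continuous_map_diff
      continuous_map_product_projection) auto

lemma is_max_of_D: "is_max_of (D n a ` {0..1}) (SUP p\<in>{0..1}. D n a p)"
  unfolding D_def by (intro is_max_of_SUP continuous_intros) auto

lemma exists_minimizer_SUP_D:
  "\<exists>a\<in>{..n} \<rightarrow>\<^sub>E {0..1}. \<forall>b\<in>{..n} \<rightarrow>\<^sub>E {0..1}.
     (SUP p\<in>{0..1}. D n a p) \<le> (SUP p\<in>{0..1}. D n b p)"
proof (rule compactin_lower_semicontinuous_attains_inf)
  show "compactin (product_topology (\<lambda>_. euclideanreal) {..n}) ({..n} \<rightarrow>\<^sub>E {0..1})"
    by (simp add: compactin_PiE)
  show "closedin (product_topology (\<lambda>_. euclideanreal) {..n})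
     {a \<in> topspace (product_topology (\<lambda>_. euclideanreal) {..n}). (SUP p\<in>{0..1}. D n a p) \<le> t}" for t
    by (rule closedin_SUP_continuous_le[OF continuous_map_D is_max_of_D])
qed (auto simp: PiE_eq_empty_iff)

lemma is_min_of_SUP_expected_D:
  assumes "a \<in> {..n} \<rightarrow>\<^sub>E {0..1}"
    and min: "\<forall>b\<in>{..n} \<rightarrow>\<^sub>E {0..1}. (SUP p\<in>{0..1}. D n a p) \<le> (SUP p\<in>{0..1}. D n b p)"
  shows "is_min_of ((\<lambda>\<sigma>. SUP p\<in>{0..1}. expected_D n \<sigma> p) ` ({..n} \<rightarrow>\<^sub>E Omega))
           (SUP p\<in>{0..1}. D n a p)"
  unfolding is_min_of_def
proof (intro conjI ballI)
  let ?\<delta> = "\<lambda>k\<in>{..n}. return unit_borel (a k)"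
  have "?\<delta> \<in> {..n} \<rightarrow>\<^sub>E Omega"
    using assms(1) by (auto intro: return_in_Omega)
  then show "(SUP p\<in>{0..1}. D n a p) \<in> (\<lambda>\<sigma>. SUP p\<in>{0..1}. expected_D n \<sigma> p) ` ({..n} \<rightarrow>\<^sub>E Omega)"
    using expected_D_return[OF assms(1)] by (intro image_eqI[where x = ?\<delta>]) auto
next
  fix y assume "y \<in> (\<lambda>\<sigma>. SUP p\<in>{0..1}. expected_D n \<sigma> p) ` ({..n} \<rightarrow>\<^sub>E Omega)"
  then obtain \<sigma> where \<sigma>: "\<sigma> \<in> {..n} \<rightarrow>\<^sub>E Omega" and y: "y = (SUP p\<in>{0..1}. expected_D n \<sigma> p)"
    by blast
  let ?m = "\<lambda>k\<in>{..n}. \<integral>x. x \<partial>\<sigma> k"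
  have "(SUP p\<in>{0..1}. D n a p) \<le> (SUP p\<in>{0..1}. D n ?m p)"
    using min expectations_in_cube[OF \<sigma>] by blast
  also have "\<dots> \<le> y"
    unfolding y
  proof (rule cSUP_mono)
    show "bdd_above (expected_D n \<sigma> ` {0..1})"
      using \<sigma> by (intro bounded_imp_bdd_above compact_imp_bounded compact_continuous_image
          continuous_on_expected_D compact_Icc)
  qed (use D_expectation_le_expected_D[OF \<sigma>] in fastforce)+
  finally show "(SUP p\<in>{0..1}. D n a p) \<le> y" .
qed

lemma D_nonneg: "p \<in> {0..1} \<Longrightarrow> D n a p \<ge> 0"
  unfolding D_def by (intro sum_nonneg) auto

theorem theorem4p2:
  fixes n :: nat
  assumes "n \<ge> 1"
  shows "\<exists>V.
    minmax_val ({..n} \<rightarrow>\<^sub>E Omega) Omega (E n) V \<and>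
    minmax_val ({..n} \<rightarrow>\<^sub>E {0..1}) {0..1} (D n) V \<and>
    is_min_of ((\<lambda>a. SUP p\<in>{0..1}. \<bar>D n a p\<bar>) ` ({..n} \<rightarrow>\<^sub>E {0..1})) V"
proof -
  obtain a where a: "a \<in> {..n} \<rightarrow>\<^sub>E {0..1}"
    and min: "\<forall>b\<in>{..n} \<rightarrow>\<^sub>E {0..1}. (SUP p\<in>{0..1}. D n a p) \<le> (SUP p\<in>{0..1}. D n b p)"
    using exists_minimizer_SUP_D by blast
  have min_D: "is_min_of ((\<lambda>b. SUP p\<in>{0..1}. D n b p) ` ({..n} \<rightarrow>\<^sub>E {0..1}))
      (SUP p\<in>{0..1}. D n a p)"
    using a min unfolding is_min_of_def by auto
  have "(SUP p\<in>{0..1}. \<bar>D n b p\<bar>) = (SUP p\<in>{0..1}. D n b p)" for b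
    by (intro SUP_cong) (auto simp: D_nonneg)
  then show ?thesis
    using min_D is_max_of_D is_max_of_E is_min_of_SUP_expected_D[OF a min]
    by (intro exI[of _ "SUP p\<in>{0..1}. D n a p"] conjI minmax_valI) auto
qed

end
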